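(* Let $n$ be a positive integer and let $\lambda$ be a partition with at most $n$ nonzero parts. Then the number $|\mathrm{SVT}(\lambda,n)|$ of set-valued tableaux of shape $\lambda$ with entries in $[n]$ is odd.
   Context: A partition $\lambda$ is identified with its Young diagram $\{(i,j)\in\mathbb{Z}_{>0}^2 : j\le\lambda_i\}$ (row index $i$ increasing downward). A set-valued tableau of shape $\lambda$ with entries in $[n]=\{1,\dots,n\}$ assigns a non-empty subset $T_{i,j}\subseteq[n]$ to each box $(i,j)\in\lambda$ such that $\max T_{i,j}\le\min T_{i,j+1}$ whenever $(i,j),(i,j+1)\in\lambda$ and $\max T_{i,j}<\min T_{i+1,j}$ whenever $(i,j),(i+1,j)\in\lambda$; $\mathrm{SVT}(\lambda,n)$ is the set of these. *)

theory Defs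
  imports Main
begin

text \<open>A partition is a weakly decreasing finite list of positive integers
  (its nonzero parts); row i (1-based) has length lam ! (i-1).\<close>
definition is_partition :: "nat list \<Rightarrow> bool" where
  "is_partition lam \<longleftrightarrow> sorted (rev lam) \<and> (\<forall>x\<in>set lam. 0 < x)"

definition young_diagram :: "nat list \<Rightarrow> (nat \<times> nat) set" where
  "young_diagram lam = {(i, j). 1 \<le> i \<and> i \<le> length lam \<and> 1 \<le> j \<and> j \<le> lam ! (i - 1)}"

definition SVT :: "nat list \<Rightarrow> nat \<Rightarrow> (nat \<times> nat \<Rightarrow> nat set) set" where
  "SVT lam n = {T.
     (\<forall>b. b \<notin> young_diagram lam \<longrightarrow> T b = {}) \<and>
     (\<forall>b\<in>young_diagram lam. T b \<noteq> {} \<and> T b \<subseteq> {1..n}) \<and>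
     (\<forall>i j. (i, j) \<in> young_diagram lam \<and> (i, j + 1) \<in> young_diagram lam
          \<longrightarrow> Max (T (i, j)) \<le> Min (T (i, j + 1))) \<and>
     (\<forall>i j. (i, j) \<in> young_diagram lam \<and> (i + 1, j) \<in> young_diagram lam
          \<longrightarrow> Max (T (i, j)) < Min (T (i + 1, j)))}"

end

theory Submission
  imports Defs
begin

text \<open>The count is odd more generally for set-valued fillings of any finite set D of
  boxes in which the entries of box b are bounded by a flag f b that is at least its row
  index. Remove a box c = (i, j) of D with no box to its right or below. A filling of D is
  then a filling T of the rest together with a nonempty subset of the entries admissible
  in c, and a finite set A has 2^|A| - 1 nonempty subsets, an odd number exactly when
  A \<noteq> {}. So modulo 2 only the fillings T count that leave room for the entry f c in c:
  those with entries at most f c in box (i, j - 1) and less than f c in box (i - 1, j).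
  They are the fillings of the smaller set for suitably tightened flags, which are still
  at least the row index, and induction on D applies.\<close>

definition flagged_SVT :: "(nat \<times> nat) set \<Rightarrow> (nat \<times> nat \<Rightarrow> nat) \<Rightarrow> (nat \<times> nat \<Rightarrow> nat set) set" where
  "flagged_SVT D f = {T.
     (\<forall>b. b \<notin> D \<longrightarrow> T b = {}) \<and>
     (\<forall>b\<in>D. T b \<noteq> {} \<and> T b \<subseteq> {1..f b}) \<and>
     (\<forall>i j. (i, j) \<in> D \<and> (i, j + 1) \<in> D \<longrightarrow> Max (T (i, j)) \<le> Min (T (i, j + 1))) \<and>
     (\<forall>i j. (i, j) \<in> D \<and> (i + 1, j) \<in> D \<longrightarrow> Max (T (i, j)) < Min (T (i + 1, j)))}"

lemma SVT_eq_flagged_SVT: "SVT lam n = flagged_SVT (young_diagram lam) (\<lambda>_. n)"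
  by (simp add: SVT_def flagged_SVT_def)

lemma flagged_SVT_outside: "T \<in> flagged_SVT D f \<Longrightarrow> b \<notin> D \<Longrightarrow> T b = {}"
  unfolding flagged_SVT_def mem_Collect_eq by blast

lemma flagged_SVT_box:
  assumes "T \<in> flagged_SVT D f" "b \<in> D"
  shows "T b \<noteq> {}" "T b \<subseteq> {1..f b}" "finite (T b)"
proof -
  show "T b \<noteq> {}" and bounded: "T b \<subseteq> {1..f b}"
    using assms unfolding flagged_SVT_def mem_Collect_eq by blast+
  show "finite (T b)" using bounded by (rule finite_subset) simp
qed

lemma flagged_SVT_mono:
  assumes "\<And>b. b \<in> D \<Longrightarrow> g b \<le> f b"
  shows "flagged_SVT D g \<subseteq> flagged_SVT D f"
proof -
  have "{1..g b} \<subseteq> {1..f b}" if "b \<in> D" for b using assms[OF that] by simp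
  then show ?thesis unfolding flagged_SVT_def by blast
qed

lemma finite_flagged_SVT:
  assumes "finite D"
  shows "finite (flagged_SVT D f)"
proof (rule finite_subset)
  let ?E = "\<Union>b\<in>D. {1..f b}"
  show "flagged_SVT D f \<subseteq> {T. \<forall>b. (b \<in> D \<longrightarrow> T b \<in> Pow ?E) \<and> (b \<notin> D \<longrightarrow> T b = {})}"
    unfolding flagged_SVT_def by blast
  show "finite {T. \<forall>b. (b \<in> D \<longrightarrow> T b \<in> Pow ?E) \<and> (b \<notin> D \<longrightarrow> T b = {})}"
    using assms by (intro finite_set_of_finite_funs) auto
qed

lemma finite_young_diagram: "finite (young_diagram lam)"
proof -
  have "young_diagram lam = (SIGMA i:{1..length lam}. {1..lam ! (i - 1)})"
    by (auto simp: young_diagram_def)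
  then show ?thesis by simp
qed

lemma odd_card_nonempty_subsets:
  assumes "finite A"
  shows "odd (card {S. S \<noteq> {} \<and> S \<subseteq> A}) \<longleftrightarrow> A \<noteq> {}"
proof -
  have "{S. S \<noteq> {} \<and> S \<subseteq> A} = Pow A - {{}}" by auto
  then have "card {S. S \<noteq> {} \<and> S \<subseteq> A} = 2 ^ card A - 1"
    using assms by (simp add: card_Pow)
  moreover have "card A = 0 \<longleftrightarrow> A = {}" using assms by simp
  ultimately show ?thesis
    by (cases "card A") (simp_all add: Suc_leI)
qed

lemma exists_corner:
  fixes D :: "(nat \<times> nat) set"
  assumes "finite D" "D \<noteq> {}"
  obtains i j where "(i, j) \<in> D" "(i, j + 1) \<notin> D" "(i + 1, j) \<notin> D"
proof -
  let ?diag = "\<lambda>b :: nat \<times> nat. fst b + snd b"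
  have "Max (?diag ` D) \<in> ?diag ` D" using assms by simp
  then obtain c where c: "Max (?diag ` D) = ?diag c" "c \<in> D" by (rule imageE)
  have below_c: "?diag b \<le> ?diag c" if "b \<in> D" for b
    unfolding c(1)[symmetric] using assms(1) that by simp
  show thesis
  proof (rule that[of "fst c" "snd c"])
    show "(fst c, snd c) \<in> D" using c(2) by simp
    show "(fst c, snd c + 1) \<notin> D" using below_c[of "(fst c, snd c + 1)"] by auto
    show "(fst c + 1, snd c) \<notin> D" using below_c[of "(fst c + 1, snd c)"] by auto
  qed
qed

definition corner_entries ::
  "(nat \<times> nat) set \<Rightarrow> (nat \<times> nat \<Rightarrow> nat) \<Rightarrow> nat \<times> nat \<Rightarrow> (nat \<times> nat \<Rightarrow> nat set) \<Rightarrow> nat set" where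
  "corner_entries D f c T = {x \<in> {1..f c}. \<forall>i j.
     ((i, j) \<in> D \<and> (i, j + 1) = c \<longrightarrow> Max (T (i, j)) \<le> x) \<and>
     ((i, j) \<in> D \<and> (i + 1, j) = c \<longrightarrow> Max (T (i, j)) < x)}"

lemma finite_corner_entries: "finite (corner_entries D f c T)"
  by (simp add: corner_entries_def)

lemma subset_corner_entries_iff:
  assumes "S \<noteq> {}" "S \<subseteq> {1..f c}"
  shows "S \<subseteq> corner_entries D f c T \<longleftrightarrow>
    (\<forall>i j. (i, j) \<in> D \<and> (i, j + 1) = c \<longrightarrow> Max (T (i, j)) \<le> Min S) \<and>
    (\<forall>i j. (i, j) \<in> D \<and> (i + 1, j) = c \<longrightarrow> Max (T (i, j)) < Min S)"
proof -
  have "finite S" using assms(2) by (rule finite_subset) simp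
  with assms show ?thesis
    by (auto simp: corner_entries_def subset_iff)
qed

lemma flagged_SVT_insert_corner_iff:
  assumes "(i, j) \<notin> D" "(i, j + 1) \<notin> D" "(i + 1, j) \<notin> D"
  shows "T \<in> flagged_SVT (insert (i, j) D) f \<longleftrightarrow>
    T((i, j) := {}) \<in> flagged_SVT D f \<and> T (i, j) \<noteq> {} \<and>
    T (i, j) \<subseteq> corner_entries D f (i, j) (T((i, j) := {}))"
proof (cases "T (i, j) \<noteq> {} \<and> T (i, j) \<subseteq> {1..f (i, j)}")
  case True
  with assms show ?thesis
    by (auto simp: subset_corner_entries_iff flagged_SVT_def)
next
  case False
  then show ?thesis by (auto simp: flagged_SVT_def corner_entries_def)
qed

lemma card_flagged_SVT_insert_corner:
  assumes "finite D" "(i, j) \<notin> D" "(i, j + 1) \<notin> D" "(i + 1, j) \<notin> D"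
  shows "card (flagged_SVT (insert (i, j) D) f) =
    (\<Sum>T\<in>flagged_SVT D f. card {S. S \<noteq> {} \<and> S \<subseteq> corner_entries D f (i, j) T})"
proof -
  let ?c = "(i, j)"
  let ?fillings = "\<lambda>T. {S. S \<noteq> {} \<and> S \<subseteq> corner_entries D f ?c T}"
  let ?Sigma = "SIGMA T:flagged_SVT D f. ?fillings T"
  let ?split = "\<lambda>T. (T(?c := {}), T ?c)" and ?join = "\<lambda>(T, S). T(?c := S)"
  have "bij_betw ?split (flagged_SVT (insert ?c D) f) ?Sigma"
  proof (rule bij_betw_byWitness[where f' = ?join])
    show "\<forall>T\<in>flagged_SVT (insert ?c D) f. ?join (?split T) = T"
      by simp
    show "\<forall>p\<in>?Sigma. ?split (?join p) = p"
      using flagged_SVT_outside[OF _ assms(2)] by (auto simp: fun_upd_idem_iff)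
    show "?split ` flagged_SVT (insert ?c D) f \<subseteq> ?Sigma"
      using flagged_SVT_insert_corner_iff[OF assms(2-4)] by auto
    show "?join ` ?Sigma \<subseteq> flagged_SVT (insert ?c D) f"
    proof (rule image_subsetI)
      fix p assume "p \<in> ?Sigma"
      then obtain T S where p: "p = (T, S)" and T: "T \<in> flagged_SVT D f" and S: "S \<in> ?fillings T"
        by blast
      have "(T(?c := S))(?c := {}) = T"
        using flagged_SVT_outside[OF T assms(2)] by (simp add: fun_upd_idem_iff)
      with T S show "?join p \<in> flagged_SVT (insert ?c D) f"
        by (simp add: p flagged_SVT_insert_corner_iff[OF assms(2-4)])
    qed
  qed
  then have "card (flagged_SVT (insert ?c D) f) = card ?Sigma"
    by (rule bij_betw_same_card)
  also have "\<dots> = (\<Sum>T\<in>flagged_SVT D f. card (?fillings T))"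
  proof (rule card_SigmaI)
    show "finite (flagged_SVT D f)" using assms(1) by (rule finite_flagged_SVT)
    show "\<forall>T\<in>flagged_SVT D f. finite (?fillings T)"
      by (simp add: finite_corner_entries)
  qed
  finally show ?thesis .
qed

definition tighten_flag :: "(nat \<times> nat \<Rightarrow> nat) \<Rightarrow> nat \<times> nat \<Rightarrow> nat \<times> nat \<Rightarrow> nat" where
  "tighten_flag f c b =
     (if (fst b, snd b + 1) = c then min (f b) (f c)
      else if (fst b + 1, snd b) = c then min (f b) (f c - 1)
      else f b)"

lemma row_le_tighten_flag: "fst b \<le> f b \<Longrightarrow> fst c \<le> f c \<Longrightarrow> fst b \<le> tighten_flag f c b"
  by (auto simp: tighten_flag_def)

lemma flagged_SVT_tighten_flag_iff:
  assumes T: "T \<in> flagged_SVT D f" and "1 \<le> f c"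
  shows "T \<in> flagged_SVT D (tighten_flag f c) \<longleftrightarrow> corner_entries D f c T \<noteq> {}"
proof -
  have box_iff: "T b \<subseteq> {1..tighten_flag f c b} \<longleftrightarrow>
      ((fst b, snd b + 1) = c \<longrightarrow> Max (T b) \<le> f c) \<and> ((fst b + 1, snd b) = c \<longrightarrow> Max (T b) < f c)"
    if "b \<in> D" for b
    using flagged_SVT_box[OF T that] assms(2)
    by (auto simp: tighten_flag_def subset_iff Max_le_iff)
  have "T \<in> flagged_SVT D (tighten_flag f c) \<longleftrightarrow> (\<forall>b\<in>D. T b \<subseteq> {1..tighten_flag f c b})"
    using T unfolding flagged_SVT_def by auto
  also have "\<dots> \<longleftrightarrow> (\<forall>b\<in>D.
      ((fst b, snd b + 1) = c \<longrightarrow> Max (T b) \<le> f c) \<and> ((fst b + 1, snd b) = c \<longrightarrow> Max (T b) < f c))"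
    using box_iff by (rule ball_cong[OF refl])
  also have "\<dots> \<longleftrightarrow> f c \<in> corner_entries D f c T"
    using assms(2) by (auto simp: corner_entries_def)
  also have "\<dots> \<longleftrightarrow> corner_entries D f c T \<noteq> {}"
    by (force simp: corner_entries_def)
  finally show ?thesis .
qed

lemma odd_card_flagged_SVT:
  assumes "finite D" "\<forall>b\<in>D. 1 \<le> fst b \<and> fst b \<le> f b"
  shows "odd (card (flagged_SVT D f))"
  using assms
proof (induction D arbitrary: f rule: finite_psubset_induct)
  case (psubset D)
  show ?case
  proof (cases "D = {}")
    case True
    then have "flagged_SVT D f = {\<lambda>_. {}}" by (auto simp: flagged_SVT_def)
    then show ?thesis by simp
  next
    case False
    with psubset.hyps(1) obtain i j where c: "(i, j) \<in> D" "(i, j + 1) \<notin> D" "(i + 1, j) \<notin> D"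
      by (rule exists_corner)
    define D' where "D' = D - {(i, j)}"
    define f' where "f' = tighten_flag f (i, j)"
    let ?fillings = "\<lambda>T. {S. S \<noteq> {} \<and> S \<subseteq> corner_entries D' f (i, j) T}"
    have D: "D = insert (i, j) D'" and D': "D' \<subset> D" "finite D'" "(i, j) \<notin> D'"
      using c(1) psubset.hyps(1) by (auto simp: D'_def)
    have flag_c: "1 \<le> f (i, j)" "i \<le> f (i, j)" using psubset.prems c(1) by force+
    have "card (flagged_SVT D f) = (\<Sum>T\<in>flagged_SVT D' f. card (?fillings T))"
      unfolding D using D'(2,3) c(2,3) by (intro card_flagged_SVT_insert_corner) (auto simp: D'_def)
    moreover have "{T \<in> flagged_SVT D' f. odd (card (?fillings T))} = flagged_SVT D' f'"
    proof -
      have "odd (card (?fillings T)) \<longleftrightarrow> T \<in> flagged_SVT D' f'" if "T \<in> flagged_SVT D' f" for T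
        using that flag_c(1) unfolding f'_def
        by (simp add: odd_card_nonempty_subsets finite_corner_entries flagged_SVT_tighten_flag_iff)
      moreover have "flagged_SVT D' f' \<subseteq> flagged_SVT D' f"
        by (rule flagged_SVT_mono) (simp add: f'_def tighten_flag_def)
      ultimately show ?thesis by blast
    qed
    moreover have "odd (card (flagged_SVT D' f'))"
    proof (rule psubset.IH[OF D'(1)])
      show "\<forall>b\<in>D'. 1 \<le> fst b \<and> fst b \<le> f' b"
        using psubset.prems flag_c(2) by (auto simp: D'_def f'_def intro: row_le_tighten_flag)
    qed
    ultimately show ?thesis
      using finite_flagged_SVT[OF D'(2)] by (simp add: even_sum_iff)
  qed
qed

theorem corollaryA2:
  fixes n :: nat and lam :: "nat list"
  assumes "0 < n" and "is_partition lam" and "length lam \<le> n"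
  shows "odd (card (SVT lam n))"
proof -
  have "\<forall>b\<in>young_diagram lam. 1 \<le> fst b \<and> fst b \<le> n"
    using assms(3) by (auto simp: young_diagram_def)
  then show ?thesis
    unfolding SVT_eq_flagged_SVT by (intro odd_card_flagged_SVT finite_young_diagram)
qed

end
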